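(* Assume the standing setting and the type II decomposition for a type II edge $e=uw$. Then $U_1\neq\emptyset$, $W_2\neq\emptyset$, $|U_1|\ge|W_1|$ and $|W_2|\ge|U_2|$.
   Context: Graphs may have multiple edges but no loops. An edge is admissible if it lies in some perfect matching; a connected graph with at least two vertices is matching covered if every edge is admissible; an edge $e$ of a matching covered graph $G$ is removable if $G-e$ is matching covered, and nonremovable otherwise. A brick is a 3-connected nonbipartite graph $G$ such that $G-x-y$ has a perfect matching for all distinct $x,y$. A nonbipartite matching covered graph $G$ is near-bipartite if it has a pair of edges $\{e_1,e_2\}$ (a removable doubleton) such that $G-\{e_1,e_2\}$ is bipartite matching covered. For a graph with a perfect matching, a nonempty vertex set $S$ is a barrier if the number of odd components of $G-S$ equals $|S|$. Standing setting: $G$ is a near-bipartite brick with removable doubleton $\{e_1,e_2\}$, $H=G-\{e_1,e_2\}$, and $(U,W)$ is the bipartition of $H$, labelled so that both ends of $e_1$ lie in $U$ and both ends of $e_2$ lie in $W$. A nonremovable edge $e\notin\{e_1,e_2\}$ of $G$ is of type II if $e$ is nonremovable in $H$. Type II decomposition: let $e=uw$ be of type II with $u\in U$, $w\in W$. There is an edge $e^*$ of $G-e$ that is nonadmissible both in $G-e$ and in $H-e$; fix such $e^*$ and an inclusion-maximal barrier $B$ of $G-e$ containing both ends of $e^*$. Let $U_1=B\cap U$, $W_2=B\cap W$, and let $U_2$ (resp. $W_1$) be the set of vertices of $U$ (resp. $W$) that form single-vertex components of $G-e-B$. *)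

theory Defs
  imports Main
begin

text \<open>A graph is given by a vertex set V, an
edge set E (edges are abstract objects of type 'e, so parallel edges are allowed),
and a fixed endpoint map ends, which assigns to each edge its two-element set of ends.
Subgraphs obtained by deleting edges/vertices keep the same endpoint map.\<close>

definition multigraph :: "('e \<Rightarrow> 'a set) \<Rightarrow> 'a set \<Rightarrow> 'e set \<Rightarrow> bool" where
  "multigraph ends V E \<longleftrightarrow> finite V \<and> finite E \<and>
     (\<forall>e\<in>E. card (ends e) = 2 \<and> ends e \<subseteq> V)"

definition avoid :: "('e \<Rightarrow> 'a set) \<Rightarrow> 'e set \<Rightarrow> 'a set \<Rightarrow> 'e set" where
  "avoid ends E S = {e\<in>E. ends e \<inter> S = {}}"

definition perfect_matching :: "('e \<Rightarrow> 'a set) \<Rightarrow> 'a set \<Rightarrow> 'e set \<Rightarrow> 'e set \<Rightarrow> bool" where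
  "perfect_matching ends V E M \<longleftrightarrow> M \<subseteq> E \<and> (\<forall>v\<in>V. \<exists>!e. e \<in> M \<and> v \<in> ends e)"

definition has_perfect_matching :: "('e \<Rightarrow> 'a set) \<Rightarrow> 'a set \<Rightarrow> 'e set \<Rightarrow> bool" where
  "has_perfect_matching ends V E \<longleftrightarrow> (\<exists>M. perfect_matching ends V E M)"

definition admissible :: "('e \<Rightarrow> 'a set) \<Rightarrow> 'a set \<Rightarrow> 'e set \<Rightarrow> 'e \<Rightarrow> bool" where
  "admissible ends V E e \<longleftrightarrow> e \<in> E \<and> (\<exists>M. perfect_matching ends V E M \<and> e \<in> M)"

definition adj :: "('e \<Rightarrow> 'a set) \<Rightarrow> 'a set \<Rightarrow> 'e set \<Rightarrow> 'a \<Rightarrow> 'a \<Rightarrow> bool" where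
  "adj ends V E x y \<longleftrightarrow> x \<in> V \<and> y \<in> V \<and> (\<exists>e\<in>E. ends e = {x, y})"

definition reach :: "('e \<Rightarrow> 'a set) \<Rightarrow> 'a set \<Rightarrow> 'e set \<Rightarrow> 'a \<Rightarrow> 'a \<Rightarrow> bool" where
  "reach ends V E = (adj ends V E)\<^sup>*\<^sup>*"

definition connected_graph :: "('e \<Rightarrow> 'a set) \<Rightarrow> 'a set \<Rightarrow> 'e set \<Rightarrow> bool" where
  "connected_graph ends V E \<longleftrightarrow> V \<noteq> {} \<and> (\<forall>x\<in>V. \<forall>y\<in>V. reach ends V E x y)"

definition components :: "('e \<Rightarrow> 'a set) \<Rightarrow> 'a set \<Rightarrow> 'e set \<Rightarrow> 'a set set" where
  "components ends V E = {{y\<in>V. reach ends V E x y} | x. x \<in> V}"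

definition matching_covered :: "('e \<Rightarrow> 'a set) \<Rightarrow> 'a set \<Rightarrow> 'e set \<Rightarrow> bool" where
  "matching_covered ends V E \<longleftrightarrow> connected_graph ends V E \<and> card V \<ge> 2 \<and>
     (\<forall>e\<in>E. admissible ends V E e)"

definition removable :: "('e \<Rightarrow> 'a set) \<Rightarrow> 'a set \<Rightarrow> 'e set \<Rightarrow> 'e \<Rightarrow> bool" where
  "removable ends V E e \<longleftrightarrow> e \<in> E \<and> matching_covered ends V (E - {e})"

definition nonremovable :: "('e \<Rightarrow> 'a set) \<Rightarrow> 'a set \<Rightarrow> 'e set \<Rightarrow> 'e \<Rightarrow> bool" where
  "nonremovable ends V E e \<longleftrightarrow> e \<in> E \<and> \<not> matching_covered ends V (E - {e})"

definition bipartition :: "('e \<Rightarrow> 'a set) \<Rightarrow> 'a set \<Rightarrow> 'e set \<Rightarrow> 'a set \<Rightarrow> 'a set \<Rightarrow> bool" where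
  "bipartition ends V E U W \<longleftrightarrow> U \<inter> W = {} \<and> U \<union> W = V \<and>
     (\<forall>e\<in>E. \<exists>u\<in>U. \<exists>w\<in>W. ends e = {u, w})"

definition bipartite :: "('e \<Rightarrow> 'a set) \<Rightarrow> 'a set \<Rightarrow> 'e set \<Rightarrow> bool" where
  "bipartite ends V E \<longleftrightarrow> (\<exists>U W. bipartition ends V E U W)"

definition k_connected :: "nat \<Rightarrow> ('e \<Rightarrow> 'a set) \<Rightarrow> 'a set \<Rightarrow> 'e set \<Rightarrow> bool" where
  "k_connected k ends V E \<longleftrightarrow> card V > k \<and>
     (\<forall>S. S \<subseteq> V \<and> card S < k \<longrightarrow> connected_graph ends (V - S) (avoid ends E S))"

definition brick :: "('e \<Rightarrow> 'a set) \<Rightarrow> 'a set \<Rightarrow> 'e set \<Rightarrow> bool" where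
  "brick ends V E \<longleftrightarrow> k_connected 3 ends V E \<and> \<not> bipartite ends V E \<and>
     (\<forall>x\<in>V. \<forall>y\<in>V. x \<noteq> y \<longrightarrow>
        has_perfect_matching ends (V - {x, y}) (avoid ends E {x, y}))"

definition removable_doubleton :: "('e \<Rightarrow> 'a set) \<Rightarrow> 'a set \<Rightarrow> 'e set \<Rightarrow> 'e \<Rightarrow> 'e \<Rightarrow> bool" where
  "removable_doubleton ends V E e1 e2 \<longleftrightarrow> matching_covered ends V E \<and> \<not> bipartite ends V E \<and>
     e1 \<in> E \<and> e2 \<in> E \<and> e1 \<noteq> e2 \<and>
     bipartite ends V (E - {e1, e2}) \<and> matching_covered ends V (E - {e1, e2})"

definition barrier :: "('e \<Rightarrow> 'a set) \<Rightarrow> 'a set \<Rightarrow> 'e set \<Rightarrow> 'a set \<Rightarrow> bool" where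
  "barrier ends V E S \<longleftrightarrow> S \<noteq> {} \<and> S \<subseteq> V \<and>
     card {C \<in> components ends (V - S) (avoid ends E S). odd (card C)} = card S"

end

theory Submission
  imports Defs
begin

text \<open>The edge e* lies in H, so it has one end in U and one in W, and both ends lie in B;
hence U1 and W2 are nonempty. Every neighbour in H of a vertex of W1 lies in U1 or is u,
because W1 consists of isolated vertices of G - e - B. Since W2 is nonempty and disjoint
from W1, the set W1 is a proper subset of W, and in the bipartite matching covered graph H
a nonempty proper subset of one colour class has strictly more neighbours than elements.
Thus |W1| < |U1| + 1, and symmetrically |U2| \<le> |W2|.\<close>

definition neighbours :: "('e \<Rightarrow> 'a set) \<Rightarrow> 'e set \<Rightarrow> 'a set \<Rightarrow> 'a set" where
  "neighbours ends F X = {y. \<exists>f\<in>F. \<exists>x\<in>X. ends f = {x, y}}"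

lemma neighbours_mono: "F \<subseteq> F' \<Longrightarrow> neighbours ends F X \<subseteq> neighbours ends F' X"
  unfolding neighbours_def by blast

lemma bipartition_parts: "bipartition ends V F U W \<Longrightarrow> U \<inter> W = {} \<and> U \<union> W = V"
  unfolding bipartition_def by blast

lemma bipartition_sym:
  assumes "bipartition ends V F U W" shows "bipartition ends V F W U"
proof -
  have "\<forall>f\<in>F. \<exists>w\<in>W. \<exists>u\<in>U. ends f = {w, u}"
    using assms unfolding bipartition_def by (metis insert_commute)
  with assms show ?thesis unfolding bipartition_def by blast
qed

lemma bipartition_edge_end:
  assumes "bipartition ends V F U W" "f \<in> F" "ends f = {x, y}" "x \<in> W"
  shows "y \<in> U" "x \<noteq> y"
proof -
  from assms(1,2) obtain u' w' where "u' \<in> U" "w' \<in> W" "ends f = {u', w'}" "U \<inter> W = {}"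
    unfolding bipartition_def by blast
  with assms(3,4) have "y = u'" "x = w'" by (auto simp: doubleton_eq_iff)
  with \<open>u' \<in> U\<close> \<open>w' \<in> W\<close> \<open>U \<inter> W = {}\<close> show "y \<in> U" "x \<noteq> y" by auto
qed

lemma bipartition_neighbours_subset:
  assumes "bipartition ends V F U W" "X \<subseteq> W" shows "neighbours ends F X \<subseteq> U"
proof
  fix y assume "y \<in> neighbours ends F X"
  then obtain f x where f: "f \<in> F" "x \<in> X" "ends f = {x, y}" unfolding neighbours_def by blast
  show "y \<in> U" using bipartition_edge_end(1)[OF assms(1) f(1,3)] f(2) assms(2) by blast
qed

lemma connected_graph_adj_leaving:
  assumes "connected_graph ends V F" "x \<in> V" "z \<in> V" "x \<in> S" "z \<notin> S"
  shows "\<exists>a b. adj ends V F a b \<and> a \<in> S \<and> b \<notin> S"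
proof -
  have "reach ends V F x z"
    using assms(1-3) unfolding connected_graph_def by blast
  then show ?thesis
    using assms(4,5) unfolding reach_def by (induction rule: rtranclp_induct) auto
qed

lemma perfect_matching_edge_unique:
  assumes "perfect_matching ends V F M" "v \<in> V" "m \<in> M" "m' \<in> M" "v \<in> ends m" "v \<in> ends m'"
  shows "m = m'"
  using assms unfolding perfect_matching_def by blast

lemma perfect_matching_partner:
  assumes "bipartition ends V F U W" "perfect_matching ends V F M" "x \<in> W"
  shows "\<exists>y. y \<in> U \<and> (\<exists>m\<in>M. ends m = {x, y})"
proof -
  have "x \<in> V" using assms(1,3) unfolding bipartition_def by blast
  then obtain m where m: "m \<in> M" "x \<in> ends m" "m \<in> F"
    using assms(2) unfolding perfect_matching_def by blast
  with assms(1) obtain u' w' where "u' \<in> U" "w' \<in> W" "ends m = {u', w'}" "U \<inter> W = {}"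
    unfolding bipartition_def by blast
  with m(1,2) assms(3) show ?thesis by (metis disjoint_iff insert_commute insertE singletonD)
qed

lemma card_le_matching_neighbours:
  assumes bp: "bipartition ends V F U W" and M: "perfect_matching ends V F M"
    and "finite V" "X \<subseteq> W"
  shows "card X \<le> card (neighbours ends M X)"
proof -
  define p where "p x = (SOME y. y \<in> U \<and> (\<exists>m\<in>M. ends m = {x, y}))" for x
  have p: "p x \<in> U \<and> (\<exists>m\<in>M. ends m = {x, p x})" if "x \<in> X" for x
  proof -
    have "x \<in> W" using that \<open>X \<subseteq> W\<close> by blast
    then show ?thesis unfolding p_def by (rule someI_ex[OF perfect_matching_partner[OF bp M]])
  qed
  have MF: "M \<subseteq> F" using M unfolding perfect_matching_def by blast
  have "inj_on p X"
  proof (rule inj_onI)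
    fix x1 x2 assume x: "x1 \<in> X" "x2 \<in> X" "p x1 = p x2"
    then obtain m1 m2 where m: "m1 \<in> M" "ends m1 = {x1, p x1}" "m2 \<in> M" "ends m2 = {x2, p x1}"
      using p by metis
    have "p x1 \<in> V" using p[OF x(1)] bipartition_parts[OF bp] by blast
    then have "m1 = m2" using perfect_matching_edge_unique[OF M] m by blast
    moreover have "x2 \<noteq> p x1"
      using bipartition_edge_end(2)[OF bp _ m(4)] m(3) MF x(2) \<open>X \<subseteq> W\<close> by blast
    ultimately show "x1 = x2" using m by (auto simp: doubleton_eq_iff)
  qed
  moreover have "p ` X \<subseteq> neighbours ends M X"
    unfolding neighbours_def using p by blast
  moreover have "neighbours ends M X \<subseteq> U"
    using neighbours_mono[OF MF, of ends X] bipartition_neighbours_subset[OF bp \<open>X \<subseteq> W\<close>]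
    by (rule subset_trans)
  then have "neighbours ends M X \<subseteq> V" using bipartition_parts[OF bp] by blast
  then have "finite (neighbours ends M X)" using \<open>finite V\<close> by (rule finite_subset)
  ultimately show ?thesis by (rule card_inj_on_le)
qed

text \<open>Strict Hall condition: a perfect matching through an edge leaving X \<union> N(X)
matches X into N(X) minus the end of that edge.\<close>

lemma matching_covered_bipartite_surplus:
  assumes mc: "matching_covered ends V F" and bp: "bipartition ends V F U W"
    and "finite V" and XW: "X \<subseteq> W" and "X \<noteq> {}" and "X \<noteq> W"
  shows "card X < card (neighbours ends F X)"
proof -
  let ?N = "neighbours ends F X"
  have NU: "?N \<subseteq> U" using bipartition_neighbours_subset[OF bp XW] .
  have UW: "U \<inter> W = {}" "U \<union> W = V" using bipartition_parts[OF bp] by auto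
  obtain x z where "x \<in> X" "z \<in> W" "z \<notin> X" using \<open>X \<noteq> {}\<close> \<open>X \<noteq> W\<close> XW by blast
  then have "\<exists>a b. adj ends V F a b \<and> a \<in> X \<union> ?N \<and> b \<notin> X \<union> ?N"
    using connected_graph_adj_leaving[OF _ _ _, of ends V F x z "X \<union> ?N"] mc XW NU UW
    unfolding matching_covered_def by blast
  then obtain a b g where g: "g \<in> F" "ends g = {a, b}" "a \<in> V" "a \<in> X \<union> ?N" "b \<notin> X \<union> ?N"
    unfolding adj_def by blast
  have aN: "a \<in> ?N"
    using g unfolding neighbours_def by blast
  have "b \<in> W" using bipartition_edge_end(1)[OF bipartition_sym[OF bp] g(1,2)] aN NU by blast
  obtain M where M: "perfect_matching ends V F M" "g \<in> M"
    using mc g(1) unfolding matching_covered_def admissible_def by blast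
  have MF: "M \<subseteq> F" using M(1) unfolding perfect_matching_def by blast
  have "neighbours ends M X \<subseteq> ?N - {a}"
  proof
    fix y assume y: "y \<in> neighbours ends M X"
    then obtain m x' where m: "m \<in> M" "x' \<in> X" "ends m = {x', y}"
      unfolding neighbours_def by blast
    have "y \<noteq> a"
    proof
      assume "y = a"
      then have "m = g" using perfect_matching_edge_unique[OF M(1) g(3) m(1) M(2)] m(3) g(2) by simp
      then have "x' \<in> {a, b}" using m(3) g(2) by auto
      then show False using m(2) g(5) aN NU XW UW(1) by blast
    qed
    moreover have "y \<in> ?N" using neighbours_mono[OF MF, of ends X] y by blast
    ultimately show "y \<in> ?N - {a}" by blast
  qed
  moreover have "finite ?N" using NU UW \<open>finite V\<close> by (meson finite_subset sup.cobounded1)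
  ultimately have "card (neighbours ends M X) \<le> card (?N - {a})" by (simp add: card_mono)
  also have "\<dots> < card ?N" using \<open>finite ?N\<close> aN by (rule card_Diff1_less)
  finally show ?thesis using card_le_matching_neighbours[OF bp M(1) \<open>finite V\<close> XW] by linarith
qed

lemma singleton_component_mem: "{x} \<in> components ends S F \<Longrightarrow> x \<in> S"
  unfolding components_def by auto

lemma singleton_component_neighbour_in_deleted:
  assumes "{x} \<in> components ends (V - B) (avoid ends F B)" "f \<in> F" "ends f = {x, y}"
    "y \<in> V" "y \<noteq> x"
  shows "y \<in> B"
proof (rule ccontr)
  assume "y \<notin> B"
  obtain z where z: "z \<in> V - B" "{x} = {v \<in> V - B. reach ends (V - B) (avoid ends F B) z v}"
    using assms(1) unfolding components_def by blast
  then have "z = x" unfolding reach_def by blast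
  have "x \<in> V - B" using singleton_component_mem[OF assms(1)] .
  with \<open>y \<notin> B\<close> assms(2-4) have "adj ends (V - B) (avoid ends F B) x y"
    unfolding adj_def avoid_def by auto
  then have "reach ends (V - B) (avoid ends F B) z y" unfolding reach_def \<open>z = x\<close> by blast
  with z(2) \<open>y \<notin> B\<close> assms(4) have "y \<in> {x}" by blast
  with assms(5) show False by simp
qed

lemma neighbours_singleton_components_subset:
  assumes bp: "bipartition ends V F U W" and "F \<subseteq> E'"
    and e: "ends e = {u, w}" "u \<in> U" "w \<in> W"
  shows "neighbours ends F {x \<in> W. {x} \<in> components ends (V - B) (avoid ends (E' - {e}) B)}
    \<subseteq> insert u (B \<inter> U)" (is "neighbours ends F ?W1 \<subseteq> _")
proof
  have UW: "U \<inter> W = {}" "U \<union> W = V" using bipartition_parts[OF bp] by auto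
  fix y assume "y \<in> neighbours ends F ?W1"
  then obtain f x where f: "f \<in> F" "x \<in> ?W1" "ends f = {x, y}"
    unfolding neighbours_def by blast
  have y: "y \<in> U" "x \<noteq> y" using bipartition_edge_end[OF bp f(1,3)] f(2) by auto
  show "y \<in> insert u (B \<inter> U)"
  proof (cases "f = e")
    case True
    then show ?thesis using f(3) e y(1) UW(1) by (auto simp: doubleton_eq_iff)
  next
    case False
    have "{x} \<in> components ends (V - B) (avoid ends (E' - {e}) B)" using f(2) by simp
    moreover have "f \<in> E' - {e}" using False f(1) \<open>F \<subseteq> E'\<close> by blast
    moreover have "y \<in> V" using y(1) UW(2) by blast
    ultimately have "y \<in> B"
      using singleton_component_neighbour_in_deleted f(3) y(2) by metis
    then show ?thesis using y(1) by blast
  qed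
qed

lemma card_singleton_components_side_le:
  assumes mc: "matching_covered ends V F" and bp: "bipartition ends V F U W"
    and "finite V" and "F \<subseteq> E'"
    and e: "ends e = {u, w}" "u \<in> U" "w \<in> W" and "B \<inter> W \<noteq> {}"
  shows "card {x \<in> W. {x} \<in> components ends (V - B) (avoid ends (E' - {e}) B)} \<le> card (B \<inter> U)"
    (is "card ?W1 \<le> _")
proof (cases "?W1 = {}")
  case True
  then show ?thesis by (metis card.empty zero_le)
next
  case False
  have W1B: "?W1 \<subseteq> V - B"
  proof
    fix x assume "x \<in> ?W1"
    then have "{x} \<in> components ends (V - B) (avoid ends (E' - {e}) B)" by simp
    then show "x \<in> V - B" by (rule singleton_component_mem)
  qed
  have "?W1 \<noteq> W" using W1B \<open>B \<inter> W \<noteq> {}\<close> by blast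
  then have "card ?W1 < card (neighbours ends F ?W1)"
    using matching_covered_bipartite_surplus[OF mc bp \<open>finite V\<close> _ False] by blast
  moreover note neighbours_singleton_components_subset[OF bp \<open>F \<subseteq> E'\<close> e, of B]
  moreover have "finite (insert u (B \<inter> U))"
    using \<open>finite V\<close> bipartition_parts[OF bp] by (metis finite_Int finite_Un finite_insert)
  ultimately have "card ?W1 < card (insert u (B \<inter> U))"
    by (meson card_mono order_less_le_trans)
  also have "\<dots> \<le> Suc (card (B \<inter> U))" by (simp add: card_insert_le_m1)
  finally show ?thesis by simp
qed

theorem mainTheorem9:
  fixes ends :: "'e \<Rightarrow> 'a set" and V :: "'a set" and E :: "'e set"
    and e1 e2 e estar :: 'e and U W B :: "'a set" and u w :: 'a
  assumes graph: "multigraph ends V E"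
    and brick: "brick ends V E"
    and doubleton: "removable_doubleton ends V E e1 e2"
    and bip: "bipartition ends V (E - {e1, e2}) U W"
    and e1U: "ends e1 \<subseteq> U" and e2W: "ends e2 \<subseteq> W"
    and e_in: "e \<in> E - {e1, e2}"
    and e_nonrem_G: "nonremovable ends V E e"
    and e_nonrem_H: "nonremovable ends V (E - {e1, e2}) e"
    and e_ends: "ends e = {u, w}" and uU: "u \<in> U" and wW: "w \<in> W"
    and estar_in: "estar \<in> (E - {e1, e2}) - {e}"
    and estar_G: "\<not> admissible ends V (E - {e}) estar"
    and estar_H: "\<not> admissible ends V ((E - {e1, e2}) - {e}) estar"
    and B_barrier: "barrier ends V (E - {e}) B"
    and B_estar: "ends estar \<subseteq> B"
    and B_max: "\<And>B'. barrier ends V (E - {e}) B' \<Longrightarrow> B \<subseteq> B' \<Longrightarrow> B' = B"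
  shows "B \<inter> U \<noteq> {} \<and> B \<inter> W \<noteq> {} \<and>
    card {x \<in> W. {x} \<in> components ends (V - B) (avoid ends (E - {e}) B)} \<le> card (B \<inter> U) \<and>
    card {x \<in> U. {x} \<in> components ends (V - B) (avoid ends (E - {e}) B)} \<le> card (B \<inter> W)"
proof -
  have mc: "matching_covered ends V (E - {e1, e2})"
    using doubleton unfolding removable_doubleton_def by simp
  have fin: "finite V" using graph unfolding multigraph_def by simp
  obtain a b where "a \<in> U" "b \<in> W" "ends estar = {a, b}"
    using bip estar_in unfolding bipartition_def by blast
  with B_estar have BU: "B \<inter> U \<noteq> {}" and BW: "B \<inter> W \<noteq> {}" by auto
  have "ends e = {w, u}" using e_ends by (simp add: insert_commute)
  with card_singleton_components_side_le[OF mc bip fin _ e_ends uU wW BW]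
    card_singleton_components_side_le[OF mc bipartition_sym[OF bip] fin _ _ wW uU BU]
  show ?thesis using BU BW by blast
qed

end
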